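(* Let $w,x\in\mathfrak{S}_n$ be such that $x$ is represented by a run, i.e. $x=\sigma_p\sigma_{p+1}\cdots\sigma_{p+q}$ or $x=\sigma_p\sigma_{p-1}\cdots\sigma_{p-q}$ for some $p$ and $q\ge0$. Then $|\lambda_1(wx)-\lambda_1(w)|\le1$.
   Context: Permutations are composed right to left and $\sigma_i=(i,i+1)$. For $u\in\mathfrak{S}_n$, $\lambda_1(u)$ is the length of the first row of the shape of the tableaux associated to $u$ by the Robinson–Schensted correspondence; equivalently, the length of a longest increasing subsequence of the one-line notation of $u$. *)

theory Defs
  imports "HOL-Combinatorics.Permutations" "HOL-Combinatorics.Transposition"
begin

text \<open>Permutations of {1..n} are functions nat => nat with (permutes {1..n}).
  Composition is right to left: (w o x) i = w (x i).\<close>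

definition sigma :: "nat \<Rightarrow> nat \<Rightarrow> nat" where
  "sigma i = transpose i (i + 1)"

definition prod_perms :: "(nat \<Rightarrow> nat) list \<Rightarrow> nat \<Rightarrow> nat" where
  "prod_perms fs = foldr (\<circ>) fs id"

definition asc_run :: "nat \<Rightarrow> nat \<Rightarrow> nat \<Rightarrow> nat" where
  "asc_run p q = prod_perms (map (\<lambda>k. sigma (p + k)) [0..<q+1])"

text \<open>Descending run sigma_p sigma_(p-1) ... sigma_(p-q) (used with q < p).\<close>
definition desc_run :: "nat \<Rightarrow> nat \<Rightarrow> nat \<Rightarrow> nat" where
  "desc_run p q = prod_perms (map (\<lambda>k. sigma (p - k)) [0..<q+1])"

text \<open>Length of a longest increasing subsequence of the one-line notation
  u(1) u(2) ... u(n), i.e. lambda_1 of the RS shape.\<close>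
definition lis :: "nat \<Rightarrow> (nat \<Rightarrow> nat) \<Rightarrow> nat" where
  "lis n u = Max {card S | S. S \<subseteq> {1..n} \<and> strict_mono_on S u}"

end

theory Submission
  imports Defs
begin

text \<open>Away from one position, a run is strictly increasing: the ascending run
  \<open>\<sigma>\<^sub>p \<cdots> \<sigma>\<^sub>p\<^sub>+\<^sub>q\<close> sends \<open>p + q + 1\<close> to \<open>p\<close> and shifts \<open>p, \<dots>, p + q\<close> up by one,
  and dually for the descending run. So the one-line notation of \<open>w \<circ> x\<close> is that of
  \<open>w\<close> with a single entry moved, and transporting an increasing subsequence from one
  to the other loses at most that entry. The argument never uses that \<open>w\<close> is a
  permutation.\<close>

lemma finite_lis_candidates: "finite {card S | S. S \<subseteq> {1..(n::nat)} \<and> strict_mono_on S u}"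
proof -
  have "{card S | S. S \<subseteq> {1..n} \<and> strict_mono_on S u} \<subseteq> card ` Pow {1..n}"
    by blast
  then show ?thesis
    by (rule finite_subset) (simp add: finite_Pow_iff)
qed

lemma card_le_lis: "S \<subseteq> {1..n} \<Longrightarrow> strict_mono_on S u \<Longrightarrow> card S \<le> lis n u"
  unfolding lis_def by (rule Max_ge[OF finite_lis_candidates]) blast

lemma lis_witness:
  obtains S where "S \<subseteq> {1..n}" "strict_mono_on S u" "card S = lis n u"
proof -
  have "strict_mono_on {} u"
    by (rule strict_mono_onI) simp
  then have "{card S | S. S \<subseteq> {1..n} \<and> strict_mono_on S u} \<noteq> {}"
    by blast
  then have "lis n u \<in> {card S | S. S \<subseteq> {1..n} \<and> strict_mono_on S u}"
    unfolding lis_def by (rule Max_in[OF finite_lis_candidates])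
  then show ?thesis
    using that by auto
qed

lemma strict_mono_on_image_of_comp:
  fixes x :: "'a::linorder \<Rightarrow> 'b::linorder" and w :: "'b \<Rightarrow> 'c::order"
  assumes x: "strict_mono_on A x" and "T \<subseteq> A" and wx: "strict_mono_on T (w \<circ> x)"
  shows "strict_mono_on (x ` T) w"
proof (rule strict_mono_onI)
  fix r s assume "r \<in> x ` T" "s \<in> x ` T" "r < s"
  then obtain r' s' where r': "r' \<in> T" "r = x r'" and s': "s' \<in> T" "s = x s'"
    by blast
  with \<open>r < s\<close> have "r' < s'"
    using strict_mono_on_less[OF x, of r' s'] \<open>T \<subseteq> A\<close> by auto
  then show "w r < w s"
    using strict_mono_onD[OF wx r'(1) s'(1)] r' s' by simp
qed

lemma card_le_card_Int_add_card_Diff: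
  assumes "finite B" and "T \<subseteq> B"
  shows "card T \<le> card (T \<inter> A) + card (B - A)"
proof -
  have "card T = card (T \<inter> A) + card (T - A)"
    using assms by (simp add: card_Int_Diff finite_subset)
  also have "card (T - A) \<le> card (B - A)"
    using assms by (intro card_mono) auto
  finally show ?thesis
    by simp
qed

lemma lis_comp_le:
  assumes x: "strict_mono_on A x" and "x ` A \<subseteq> {1..n}"
  shows "lis n (w \<circ> x) \<le> lis n w + card ({1..n} - A)"
proof -
  obtain T where T: "T \<subseteq> {1..n}" "strict_mono_on T (w \<circ> x)" "card T = lis n (w \<circ> x)"
    by (rule lis_witness)
  have "strict_mono_on (T \<inter> A) (w \<circ> x)"
    using T(2) by (rule monotone_on_subset) blast
  then have "strict_mono_on (x ` (T \<inter> A)) w"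
    by (rule strict_mono_on_image_of_comp[OF x Int_lower2])
  then have "card (x ` (T \<inter> A)) \<le> lis n w"
    using \<open>x ` A \<subseteq> {1..n}\<close> by (intro card_le_lis) auto
  moreover have "card (x ` (T \<inter> A)) = card (T \<inter> A)"
    using strict_mono_on_imp_inj_on[OF x] by (simp add: card_image inj_on_subset)
  moreover have "card T \<le> card (T \<inter> A) + card ({1..n} - A)"
    using T(1) by (intro card_le_card_Int_add_card_Diff) auto
  ultimately show ?thesis
    using T(3) by linarith
qed

lemma lis_le_lis_comp:
  assumes "A \<subseteq> {1..n}" and x: "strict_mono_on A x"
  shows "lis n w \<le> lis n (w \<circ> x) + card ({1..n} - x ` A)"
proof -
  obtain S where S: "S \<subseteq> {1..n}" "strict_mono_on S w" "card S = lis n w"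
    by (rule lis_witness)
  define T where "T = A \<inter> x -` S"
  have "strict_mono_on T (w \<circ> x)"
    by (rule strict_mono_onI) (auto simp: T_def dest: strict_mono_onD[OF x] strict_mono_onD[OF S(2)])
  then have "card T \<le> lis n (w \<circ> x)"
    using \<open>A \<subseteq> {1..n}\<close> by (intro card_le_lis) (auto simp: T_def)
  moreover have "card (S \<inter> x ` A) = card T"
  proof -
    have "S \<inter> x ` A = x ` T"
      unfolding T_def by blast
    then show ?thesis
      using strict_mono_on_imp_inj_on[OF x] unfolding T_def by (simp add: card_image inj_on_subset)
  qed
  moreover have "card S \<le> card (S \<inter> x ` A) + card ({1..n} - x ` A)"
    using S(1) by (intro card_le_card_Int_add_card_Diff) auto
  ultimately show ?thesis
    using S(3) by linarith
qed

lemma lis_comp_diff_le: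
  assumes "A \<subseteq> {1..n}" and x: "strict_mono_on A x" and "x ` A \<subseteq> {1..n}"
  shows "\<bar>int (lis n (w \<circ> x)) - int (lis n w)\<bar> \<le> int (card ({1..n} - A))"
proof -
  have "card (x ` A) = card A"
    using strict_mono_on_imp_inj_on[OF x] by (rule card_image)
  then have "card ({1..n} - x ` A) = card ({1..n} - A)"
    using assms by (simp add: card_Diff_subset finite_subset)
  then show ?thesis
    using lis_comp_le[OF x \<open>x ` A \<subseteq> {1..n}\<close>, of w] lis_le_lis_comp[OF \<open>A \<subseteq> {1..n}\<close> x, of w]
    by linarith
qed

lemma lis_comp_diff_le_1:
  assumes "a \<in> {1..n}" and "strict_mono_on (- {a}) x" and "x ` ({1..n} - {a}) \<subseteq> {1..n}"
  shows "\<bar>int (lis n (w \<circ> x)) - int (lis n w)\<bar> \<le> 1"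
proof -
  have "strict_mono_on ({1..n} - {a}) x"
    using assms(2) by (rule monotone_on_subset) blast
  then show ?thesis
    using lis_comp_diff_le[OF _ _ assms(3), of w] \<open>a \<in> {1..n}\<close> by (simp add: Diff_Diff_Int)
qed

lemma prod_perms_append_single: "prod_perms (fs @ [f]) = prod_perms fs \<circ> f"
  by (induction fs) (auto simp: prod_perms_def)

lemma sigma_apply: "sigma j i = (if i = j then j + 1 else if i = j + 1 then j else i)"
  by (simp add: sigma_def transpose_def)

lemma asc_run_Suc: "asc_run p (Suc q) = asc_run p q \<circ> sigma (p + Suc q)"
proof -
  have "[0..<Suc q + 1] = [0..<q + 1] @ [Suc q]"
    by simp
  then show ?thesis
    unfolding asc_run_def by (simp only: map_append list.map prod_perms_append_single)
qed

lemma desc_run_Suc: "desc_run p (Suc q) = desc_run p q \<circ> sigma (p - Suc q)"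
proof -
  have "[0..<Suc q + 1] = [0..<q + 1] @ [Suc q]"
    by simp
  then show ?thesis
    unfolding desc_run_def by (simp only: map_append list.map prod_perms_append_single)
qed

lemma asc_run_apply:
  "asc_run p q i = (if p \<le> i \<and> i \<le> p + q then i + 1 else if i = p + q + 1 then p else i)"
proof (induction q arbitrary: i)
  case 0
  then show ?case
    by (simp add: asc_run_def prod_perms_def sigma_apply)
next
  case (Suc q)
  then show ?case
    by (simp add: asc_run_Suc sigma_apply) linarith
qed

lemma desc_run_apply:
  "q \<le> p \<Longrightarrow>
    desc_run p q i = (if p - q < i \<and> i \<le> p + 1 then i - 1 else if i = p - q then p + 1 else i)"
proof (induction q arbitrary: i)
  case 0
  then show ?case
    by (simp add: desc_run_def prod_perms_def sigma_apply)
next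
  case (Suc q)
  then show ?case
    by (simp add: desc_run_Suc sigma_apply) linarith
qed

lemma strict_mono_on_asc_run: "strict_mono_on (- {p + q + 1}) (asc_run p q)"
  by (rule strict_mono_onI) (simp add: asc_run_apply)

lemma strict_mono_on_desc_run: "q \<le> p \<Longrightarrow> strict_mono_on (- {p - q}) (desc_run p q)"
  by (rule strict_mono_onI) (auto simp: desc_run_apply)

theorem lemma6p2:
  fixes n p q :: nat and w x :: "nat \<Rightarrow> nat"
  assumes "w permutes {1..n}"
    and "(1 \<le> p \<and> p + q + 1 \<le> n \<and> x = asc_run p q)
         \<or> (q < p \<and> p + 1 \<le> n \<and> x = desc_run p q)"
  shows "\<bar>int (lis n (w \<circ> x)) - int (lis n w)\<bar> \<le> 1"
  using assms(2)
proof (elim disjE conjE)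
  assume "1 \<le> p" "p + q + 1 \<le> n" and x: "x = asc_run p q"
  have "asc_run p q ` ({1..n} - {p + q + 1}) \<subseteq> {1..n}"
    using \<open>p + q + 1 \<le> n\<close> by (auto simp: asc_run_apply)
  then show ?thesis
    unfolding x using \<open>1 \<le> p\<close> \<open>p + q + 1 \<le> n\<close>
    by (intro lis_comp_diff_le_1[OF _ strict_mono_on_asc_run]) auto
next
  assume "q < p" "p + 1 \<le> n" and x: "x = desc_run p q"
  have "desc_run p q ` ({1..n} - {p - q}) \<subseteq> {1..n}"
    using \<open>q < p\<close> \<open>p + 1 \<le> n\<close> by (auto simp: desc_run_apply)
  then show ?thesis
    unfolding x using \<open>q < p\<close> \<open>p + 1 \<le> n\<close>
    by (intro lis_comp_diff_le_1[OF _ strict_mono_on_desc_run]) auto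
qed

end
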